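(* Let $\lambda\in\mathfrak h_{\mathbb R}^*$ and $J\subseteq I$, and let $\mathbf P(\lambda,J)$ be the polyhedron $$\mathbf P(\lambda,J)=\operatorname{conv}_{\mathbb R}(W_J(\lambda))-\operatorname{cone}_{\mathbb R}(\Phi^+\setminus\Phi^+_J).$$ Let $\lambda'\in W_J(\lambda)$ be the element satisfying $\lambda'(h_{\alpha_j})\ge0$ for all $j\in J$. Then $F$ is a face of $\mathbf P(\lambda,J)$ if and only if $$w(F)=\operatorname{conv}_{\mathbb R}(W_{J\cap I_0}(\lambda'))-\operatorname{cone}_{\mathbb R}(\Phi^+_{I_0}\setminus\Phi^+_{J\cap I_0})$$ for some $w\in W_J$ and $I_0\subseteq I$.
   Context: Let $\mathfrak g$ be a complex semisimple Lie algebra with Cartan subalgebra $\mathfrak h$, roots $\Phi$, simple roots $\{\alpha_i:i\in I\}$, positive roots $\Phi^+$; $\mathfrak h_{\mathbb R}^*$ is the real span of $\Phi$, with the $W$-invariant inner product induced by the Killing form; $h_\alpha$ is the coroot of $\alpha$. For $K\subseteq I$: $\Phi^+_K=\Phi^+\cap\sum_{k\in K}\mathbb Z\alpha_k$, and $W_K$ is the subgroup of the Weyl group generated by the simple reflections $s_k$, $k\in K$; $W_K(\mu)$ is the $W_K$-orbit of $\mu$. $\operatorname{conv}_{\mathbb R}$ = convex hull; $\operatorname{cone}_{\mathbb R}(S)$ = set of finite nonnegative real combinations; $A-B=\{a-b:a\in A,b\in B\}$. A face of $\mathcal P\subseteq\mathbb R^n$ is $\mathcal P$ itself or $\mathcal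 P\cap H(v,w)$ where $H(v,w)=\{u:v\cdot(u-w)=0\}$, $\mathcal P\subseteq\{u:v\cdot(u-w)\ge0\}$ and $\mathcal P\cap H(v,w)\ne\emptyset$. *)

theory Defs
  imports "HOL-Analysis.Analysis"
begin

text \<open>Abstract model of the real root system of a complex semisimple Lie algebra:
  the ambient euclidean space plays the role of h_R^* (the real span of the roots),
  its inner product the one induced by the Killing form.\<close>

definition refl :: "'a::euclidean_space \<Rightarrow> 'a \<Rightarrow> 'a" where
  "refl \<alpha> x = x - (2 * (x \<bullet> \<alpha>) / (\<alpha> \<bullet> \<alpha>)) *\<^sub>R \<alpha>"

text \<open>mu(h_alpha), evaluation of mu at the coroot of alpha.\<close>
definition coroot_eval :: "'a::euclidean_space \<Rightarrow> 'a \<Rightarrow> real" where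
  "coroot_eval \<mu> \<alpha> = 2 * (\<mu> \<bullet> \<alpha>) / (\<alpha> \<bullet> \<alpha>)"

definition root_system :: "'a::euclidean_space set \<Rightarrow> bool" where
  "root_system \<Phi> \<longleftrightarrow> finite \<Phi> \<and> 0 \<notin> \<Phi> \<and> span \<Phi> = UNIV
     \<and> (\<forall>\<alpha>\<in>\<Phi>. refl \<alpha> ` \<Phi> = \<Phi>)
     \<and> (\<forall>\<alpha>\<in>\<Phi>. \<forall>\<beta>\<in>\<Phi>. coroot_eval \<beta> \<alpha> \<in> \<int>)
     \<and> (\<forall>\<alpha>\<in>\<Phi>. \<forall>c. c *\<^sub>R \<alpha> \<in> \<Phi> \<longrightarrow> c = 1 \<or> c = -1)"

definition simple_roots :: "'a::euclidean_space set \<Rightarrow> 'i set \<Rightarrow> ('i \<Rightarrow> 'a) \<Rightarrow> bool" where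
  "simple_roots \<Phi> I s \<longleftrightarrow> finite I \<and> inj_on s I \<and> s ` I \<subseteq> \<Phi> \<and> independent (s ` I)
     \<and> (\<forall>\<beta>\<in>\<Phi>. \<exists>c. (\<forall>i\<in>I. c i \<in> \<int>) \<and> \<beta> = (\<Sum>i\<in>I. c i *\<^sub>R s i)
                    \<and> ((\<forall>i\<in>I. c i \<ge> 0) \<or> (\<forall>i\<in>I. c i \<le> 0)))"

text \<open>Phi^+_K = Phi^+ \<inter> sum_{k in K} Z alpha_k; with K = I this is Phi^+.\<close>
definition pos_roots :: "'a::euclidean_space set \<Rightarrow> 'i set \<Rightarrow> ('i \<Rightarrow> 'a) \<Rightarrow> 'i set \<Rightarrow> 'a set" where
  "pos_roots \<Phi> I s K = {\<beta>\<in>\<Phi>. \<exists>c. (\<forall>i\<in>I. c i \<in> \<int> \<and> c i \<ge> 0) \<and> (\<forall>i\<in>I-K. c i = 0)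
                                   \<and> \<beta> = (\<Sum>i\<in>I. c i *\<^sub>R s i)}"

text \<open>W_K: group generated by simple reflections s_k, k in K (reflections are involutions,
  so the monoid they generate is the group).\<close>
inductive_set weyl_group :: "('i \<Rightarrow> 'a::euclidean_space) \<Rightarrow> 'i set \<Rightarrow> ('a \<Rightarrow> 'a) set"
  for s :: "'i \<Rightarrow> 'a" and K :: "'i set" where
  weyl_id: "id \<in> weyl_group s K"
| weyl_step: "w \<in> weyl_group s K \<Longrightarrow> k \<in> K \<Longrightarrow> refl (s k) \<circ> w \<in> weyl_group s K"

definition weyl_orbit :: "('i \<Rightarrow> 'a::euclidean_space) \<Rightarrow> 'i set \<Rightarrow> 'a \<Rightarrow> 'a set" where
  "weyl_orbit s K \<mu> = (\<lambda>w. w \<mu>) ` weyl_group s K"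

definition cone_R :: "'a::euclidean_space set \<Rightarrow> 'a set" where
  "cone_R S = {x. \<exists>T c. finite T \<and> T \<subseteq> S \<and> (\<forall>t\<in>T. c t \<ge> (0::real)) \<and> x = (\<Sum>t\<in>T. c t *\<^sub>R t)}"

definition set_minus :: "'a::ab_group_add set \<Rightarrow> 'a set \<Rightarrow> 'a set" where
  "set_minus A B = {a - b | a b. a \<in> A \<and> b \<in> B}"

definition hyperplane :: "'a::euclidean_space \<Rightarrow> 'a \<Rightarrow> 'a set" where
  "hyperplane v w = {u. v \<bullet> (u - w) = 0}"

definition is_face :: "'a::euclidean_space set \<Rightarrow> 'a set \<Rightarrow> bool" where
  "is_face F P \<longleftrightarrow> F = P \<or>
     (\<exists>v w. F = P \<inter> hyperplane v w \<and> P \<subseteq> {u. v \<bullet> (u - w) \<ge> 0} \<and> P \<inter> hyperplane v w \<noteq> {})"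

definition polyP :: "'a::euclidean_space set \<Rightarrow> 'i set \<Rightarrow> ('i \<Rightarrow> 'a) \<Rightarrow> 'a \<Rightarrow> 'i set \<Rightarrow> 'a set" where
  "polyP \<Phi> I s lam J = set_minus (convex hull (weyl_orbit s J lam))
                       (cone_R (pos_roots \<Phi> I s I - pos_roots \<Phi> I s J))"

end

theory Submission
  imports Defs
begin

text \<open>
  Since \<open>W\<^sub>J\<close> consists of orthogonal maps permuting both \<open>W\<^sub>J \<lambda>\<close> and \<open>\<Phi>\<^sup>+ \<setminus> \<Phi>\<^sup>+\<^sub>J\<close>, it permutes
  \<open>P(\<lambda>, J)\<close> and its faces; so it suffices to show that the standard faces
  \<open>conv (W\<^sub>J\<^sub>\<inter>\<^sub>I\<^sub>0 \<lambda>') - cone (\<Phi>\<^sup>+\<^sub>I\<^sub>0 \<setminus> \<Phi>\<^sup>+\<^sub>J\<^sub>\<inter>\<^sub>I\<^sub>0)\<close> are faces and that every face is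
  \<open>W\<^sub>J\<close>-conjugate to one.  Faces are maximal level sets of functionals.  A functional bounded
  above on \<open>P(\<lambda>, J)\<close> is nonnegative on \<open>\<Phi>\<^sup>+ \<setminus> \<Phi>\<^sup>+\<^sub>J\<close>, and after conjugation by \<open>W\<^sub>J\<close> also on the
  simple roots of \<open>J\<close>.  For such a functional \<open>g\<close> and the \<open>J\<close>-dominant \<open>\<lambda>'\<close>, two facts about
  reduced words give the maximal level set: \<open>\<lambda>' - u \<lambda>'\<close> is a nonnegative combination of simple
  roots, and \<open>g (u \<lambda>') = g \<lambda>'\<close> forces \<open>u \<lambda>'\<close> into the orbit of the parabolic subgroup generated
  by the simple reflections killed by \<open>g\<close>.
\<close>

section \<open>Reflections\<close>

lemma refl_eq: "refl a x = x - coroot_eval x a *\<^sub>R a"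
  unfolding refl_def coroot_eval_def by simp

lemma refl_linear: "linear (refl a)"
  unfolding refl_def
  by (intro linearI) (auto simp: algebra_simps add_divide_distrib)

lemma refl_invol: "a \<noteq> 0 \<Longrightarrow> refl a (refl a x) = x"
  unfolding refl_def by (auto simp: algebra_simps)

lemma refl_orthogonal: "a \<noteq> 0 \<Longrightarrow> refl a x \<bullet> refl a y = x \<bullet> y"
  unfolding refl_def
  by (auto simp: algebra_simps inner_commute)

lemma orthogonal_refl: "a \<noteq> 0 \<Longrightarrow> orthogonal_transformation (refl a)"
  by (simp add: orthogonal_transformation_def refl_linear refl_orthogonal)

lemma refl_conj:
  assumes "orthogonal_transformation u"
  shows "refl (u a) (u x) = u (refl a x)"
  using assms unfolding refl_def orthogonal_transformation_def
  by (simp add: linear_diff linear_scale)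


section \<open>Level sets of functionals on convex hulls and cones\<close>

text \<open>This is what makes level sets of a functional on a convex hull or a
  cone again a convex hull or a cone.\<close>
lemma nonneg_combination_level:
  fixes u h :: "'b \<Rightarrow> real" and f :: "'b \<Rightarrow> 'a::real_vector"
  assumes S: "finite S" and u: "\<forall>x\<in>S. u x \<ge> 0" and h: "\<forall>x\<in>S. h x \<ge> 0"
    and zero: "(\<Sum>x\<in>S. u x * h x) = 0"
  shows "(\<Sum>x\<in>S. u x *\<^sub>R f x) = (\<Sum>x\<in>{x\<in>S. h x = 0}. u x *\<^sub>R f x)"
    and "sum u S = sum u {x\<in>S. h x = 0}"
proof -
  have "\<forall>x\<in>S. u x * h x = 0"
    using sum_nonneg_eq_0_iff[OF S, of "\<lambda>x. u x * h x"] u h zero by simp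
  then have vanish: "u x = 0" if "x \<in> S" "h x \<noteq> 0" for x
    using that by auto
  show "(\<Sum>x\<in>S. u x *\<^sub>R f x) = (\<Sum>x\<in>{x\<in>S. h x = 0}. u x *\<^sub>R f x)"
    "sum u S = sum u {x\<in>S. h x = 0}"
    by (rule sum.mono_neutral_right[OF S]; auto simp: vanish)+
qed

lemma cone_R_I:
  "finite T \<Longrightarrow> T \<subseteq> S \<Longrightarrow> \<forall>t\<in>T. c t \<ge> (0::real) \<Longrightarrow> (\<Sum>t\<in>T. c t *\<^sub>R t) \<in> cone_R S"
  unfolding cone_R_def by blast

lemma cone_R_E:
  assumes "x \<in> cone_R S"
  obtains T c where "finite T" "T \<subseteq> S" "\<forall>t\<in>T. c t \<ge> (0::real)" "x = (\<Sum>t\<in>T. c t *\<^sub>R t)"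
  using assms unfolding cone_R_def by blast

lemma cone_R_finite:
  assumes "finite S"
  shows "cone_R S = {x. \<exists>c. (\<forall>t\<in>S. c t \<ge> (0::real)) \<and> x = (\<Sum>t\<in>S. c t *\<^sub>R t)}"
proof safe
  fix x assume "x \<in> cone_R S"
  then obtain T c where T: "finite T" "T \<subseteq> S" "\<forall>t\<in>T. c t \<ge> (0::real)" "x = (\<Sum>t\<in>T. c t *\<^sub>R t)"
    by (rule cone_R_E)
  define d where "d t = (if t \<in> T then c t else 0)" for t
  have "(\<Sum>t\<in>S. d t *\<^sub>R t) = (\<Sum>t\<in>T. d t *\<^sub>R t)"
    by (rule sum.mono_neutral_right[OF assms T(2)]) (auto simp: d_def)
  also have "\<dots> = x" using T(4) by (simp add: d_def)
  finally show "\<exists>c. (\<forall>t\<in>S. c t \<ge> (0::real)) \<and> x = (\<Sum>t\<in>S. c t *\<^sub>R t)"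
    using T(3) by (intro exI[of _ d]) (auto simp: d_def)
next
  fix c :: "'a \<Rightarrow> real" assume "\<forall>t\<in>S. 0 \<le> c t"
  then show "(\<Sum>t\<in>S. c t *\<^sub>R t) \<in> cone_R S" using assms by (intro cone_R_I) auto
qed

lemma cone_R_mono: "A \<subseteq> B \<Longrightarrow> cone_R A \<subseteq> cone_R B"
  unfolding cone_R_def by blast

lemma cone_R_zero: "0 \<in> cone_R S"
  unfolding cone_R_def by (intro CollectI exI[of _ "{}"]) auto

lemma cone_R_ray: "r \<in> S \<Longrightarrow> t \<ge> 0 \<Longrightarrow> t *\<^sub>R r \<in> cone_R S"
  unfolding cone_R_def by (intro CollectI exI[of _ "{r}"] exI[of _ "\<lambda>_. t"]) auto

lemma cone_R_linear_image:
  assumes lin: "linear u" and inj: "inj u"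
  shows "u ` cone_R S \<subseteq> cone_R (u ` S)"
proof
  fix y assume "y \<in> u ` cone_R S"
  then obtain T c where T: "finite T" "T \<subseteq> S" "\<forall>t\<in>T. c t \<ge> (0::real)" "y = u (\<Sum>t\<in>T. c t *\<^sub>R t)"
    unfolding cone_R_def by blast
  have "y = (\<Sum>t\<in>T. c t *\<^sub>R u t)"
    using T(4) by (simp add: linear_sum[OF lin] linear_scale[OF lin])
  also have "\<dots> = (\<Sum>r\<in>u ` T. c (inv u r) *\<^sub>R r)"
    using inj by (simp add: sum.reindex inj_on_subset)
  finally show "y \<in> cone_R (u ` S)"
    unfolding cone_R_def using T inj by (intro CollectI exI[of _ "u ` T"] exI[of _ "\<lambda>r. c (inv u r)"]) auto
qed

lemma convex_hull_level:
  fixes V :: "'a::euclidean_space set"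
  assumes V: "finite V" and bound: "\<forall>v\<in>V. g \<bullet> v \<le> m"
  shows "\<forall>a\<in>convex hull V. g \<bullet> a \<le> m"
    and "{a\<in>convex hull V. g \<bullet> a = m} = convex hull {v\<in>V. g \<bullet> v = m}"
proof -
  show "\<forall>a\<in>convex hull V. g \<bullet> a \<le> m"
    using hull_minimal[of V "{x. g \<bullet> x \<le> m}" convex] bound convex_halfspace_le by blast
  let ?W = "{v\<in>V. g \<bullet> v = m}"
  have "a \<in> convex hull ?W" if a: "a \<in> convex hull V" "g \<bullet> a = m" for a
  proof -
    obtain u where u: "\<forall>x\<in>V. u x \<ge> 0" "sum u V = 1" "a = (\<Sum>x\<in>V. u x *\<^sub>R x)"
      using a(1) convex_hull_finite[OF V] by auto
    have "(\<Sum>x\<in>V. u x * (m - g \<bullet> x)) = m * sum u V - g \<bullet> a"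
      unfolding u(3) by (simp add: algebra_simps inner_sum_right sum_subtractf sum_distrib_left)
    then have zero: "(\<Sum>x\<in>V. u x * (m - g \<bullet> x)) = 0" using u(2) a(2) by simp
    have h: "\<forall>x\<in>V. m - g \<bullet> x \<ge> 0" using bound by auto
    have W: "{x\<in>V. m - g \<bullet> x = 0} = ?W" by auto
    have "sum u ?W = 1" "a = (\<Sum>x\<in>?W. u x *\<^sub>R x)"
      using nonneg_combination_level(1)[OF V u(1) h zero, of "\<lambda>x. x"]
        nonneg_combination_level(2)[OF V u(1) h zero] u(2,3) unfolding W by simp_all
    moreover have "finite ?W" using V by simp
    ultimately show ?thesis
      unfolding convex_hull_finite[OF \<open>finite ?W\<close>] using u(1)
      by (intro CollectI exI[of _ u]) auto
  qed
  moreover have "convex hull ?W \<subseteq> {a. g \<bullet> a = m}"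
    by (rule hull_minimal) (auto simp: convex_hyperplane)
  ultimately show "{a\<in>convex hull V. g \<bullet> a = m} = convex hull ?W"
    using hull_mono[of ?W V] by blast
qed

lemma cone_R_level:
  fixes R :: "'a::euclidean_space set"
  assumes R: "finite R" and nonneg: "\<forall>r\<in>R. g \<bullet> r \<ge> 0"
  shows "\<forall>c\<in>cone_R R. g \<bullet> c \<ge> 0"
    and "{c\<in>cone_R R. g \<bullet> c = 0} = cone_R {r\<in>R. g \<bullet> r = 0}"
proof -
  have val: "g \<bullet> (\<Sum>t\<in>T. d t *\<^sub>R t) = (\<Sum>t\<in>T. d t * (g \<bullet> t))" for T d
    by (simp add: inner_sum_right)
  have expand: "\<exists>d. (\<forall>t\<in>R. d t \<ge> 0) \<and> c = (\<Sum>t\<in>R. d t *\<^sub>R t)" if "c \<in> cone_R R" for c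
    using that cone_R_finite[OF R] by simp
  show "\<forall>c\<in>cone_R R. g \<bullet> c \<ge> 0"
  proof
    fix c assume "c \<in> cone_R R"
    then obtain d where d: "\<forall>t\<in>R. d t \<ge> 0" and c: "c = (\<Sum>t\<in>R. d t *\<^sub>R t)"
      using expand by blast
    show "g \<bullet> c \<ge> 0" unfolding c val using d nonneg by (intro sum_nonneg mult_nonneg_nonneg) auto
  qed
  have "c \<in> cone_R {r\<in>R. g \<bullet> r = 0}" if c_in: "c \<in> cone_R R" and zero: "g \<bullet> c = 0" for c
  proof -
    obtain d where d: "\<forall>t\<in>R. d t \<ge> 0" and c: "c = (\<Sum>t\<in>R. d t *\<^sub>R t)"
      using expand[OF c_in] by blast
    have "(\<Sum>t\<in>R. d t * (g \<bullet> t)) = 0" using zero unfolding c val .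
    from nonneg_combination_level(1)[OF R d nonneg this, of "\<lambda>x. x"]
    have "c = (\<Sum>t\<in>{r\<in>R. g \<bullet> r = 0}. d t *\<^sub>R t)" unfolding c .
    also have "\<dots> \<in> cone_R {r\<in>R. g \<bullet> r = 0}"
      using R d by (intro cone_R_I) auto
    finally show ?thesis .
  qed
  moreover have "c \<in> cone_R R \<and> g \<bullet> c = 0" if c_in: "c \<in> cone_R {r\<in>R. g \<bullet> r = 0}" for c
  proof
    have "cone_R {r\<in>R. g \<bullet> r = 0} \<subseteq> cone_R R" by (rule cone_R_mono) auto
    then show "c \<in> cone_R R" using c_in ..
    obtain T d where T: "T \<subseteq> {r\<in>R. g \<bullet> r = 0}" and c: "c = (\<Sum>t\<in>T. d t *\<^sub>R t)"
      using c_in by (rule cone_R_E)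
    show "g \<bullet> c = 0" unfolding c val using T by (intro sum.neutral) auto
  qed
  ultimately show "{c\<in>cone_R R. g \<bullet> c = 0} = cone_R {r\<in>R. g \<bullet> r = 0}"
    by blast
qed

lemma hull_minus_cone_level:
  fixes V R :: "'a::euclidean_space set"
  assumes V: "finite V" and R: "finite R"
    and gV: "\<forall>v\<in>V. g \<bullet> v \<le> m" and gR: "\<forall>r\<in>R. g \<bullet> r \<ge> 0"
  shows "\<forall>p\<in>set_minus (convex hull V) (cone_R R). g \<bullet> p \<le> m"
    and "{p\<in>set_minus (convex hull V) (cone_R R). g \<bullet> p = m}
         = set_minus (convex hull {v\<in>V. g \<bullet> v = m}) (cone_R {r\<in>R. g \<bullet> r = 0})"
proof -
  note hull = convex_hull_level[OF V gV] and cone = cone_R_level[OF R gR]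
  show "\<forall>p\<in>set_minus (convex hull V) (cone_R R). g \<bullet> p \<le> m"
    using hull(1) cone(1) by (fastforce simp: set_minus_def inner_diff_right)
  have "g \<bullet> (a - c) = m \<longleftrightarrow> g \<bullet> a = m \<and> g \<bullet> c = 0"
    if "a \<in> convex hull V" "c \<in> cone_R R" for a c
    using that hull(1) cone(1) by (fastforce simp: inner_diff_right)
  then show "{p\<in>set_minus (convex hull V) (cone_R R). g \<bullet> p = m}
         = set_minus (convex hull {v\<in>V. g \<bullet> v = m}) (cone_R {r\<in>R. g \<bullet> r = 0})"
    unfolding hull(2)[symmetric] cone(2)[symmetric] set_minus_def by blast
qed

section \<open>Faces as maximal level sets\<close>

text \<open>A proper face is the nonempty set where some linear functional attains its maximum
  over \<open>P\<close> (take \<open>f = -v\<close> in the definition).\<close>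
lemma is_face_support:
  "is_face F P \<longleftrightarrow>
     F = P \<or> (\<exists>f m. (\<forall>p\<in>P. f \<bullet> p \<le> m) \<and> F = {p\<in>P. f \<bullet> p = m} \<and> F \<noteq> {})"
proof -
  have hyp: "u \<in> hyperplane v w \<longleftrightarrow> (- v) \<bullet> u = (- v) \<bullet> w"
    and half: "v \<bullet> (u - w) \<ge> 0 \<longleftrightarrow> (- v) \<bullet> u \<le> (- v) \<bullet> w" for u v w :: 'a
    by (auto simp: hyperplane_def inner_diff_right)
  have "(\<exists>v w. F = P \<inter> hyperplane v w \<and> P \<subseteq> {u. v \<bullet> (u - w) \<ge> 0} \<and> P \<inter> hyperplane v w \<noteq> {})
    \<longleftrightarrow> (\<exists>f m. (\<forall>p\<in>P. f \<bullet> p \<le> m) \<and> F = {p\<in>P. f \<bullet> p = m} \<and> F \<noteq> {})"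
    (is "?hyperplane \<longleftrightarrow> ?level")
  proof
    assume ?hyperplane
    then obtain v w where vw: "F = P \<inter> hyperplane v w" "P \<subseteq> {u. v \<bullet> (u - w) \<ge> 0}" "F \<noteq> {}"
      by blast
    then have "F = {p\<in>P. (- v) \<bullet> p = (- v) \<bullet> w}" "\<forall>p\<in>P. (- v) \<bullet> p \<le> (- v) \<bullet> w"
      using hyp half by auto
    then show ?level using vw(3) by blast
  next
    assume ?level
    then obtain f m p0 where f: "\<forall>p\<in>P. f \<bullet> p \<le> m" "F = {p\<in>P. f \<bullet> p = m}" and "p0 \<in> F"
      by blast
    then have "f \<bullet> p0 = m" by simp
    then have "F = P \<inter> hyperplane (- f) p0" "P \<subseteq> {u. (- f) \<bullet> (u - p0) \<ge> 0}"
      using f by (auto simp: hyperplane_def inner_diff_right)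
    then show ?hyperplane using \<open>p0 \<in> F\<close> by blast
  qed
  then show ?thesis unfolding is_face_def by blast
qed

lemma bounded_above_recession_nonneg:
  assumes a: "a \<in> A" and r: "r \<in> R" and bound: "\<forall>p\<in>set_minus A (cone_R R). f \<bullet> p \<le> m"
  shows "f \<bullet> r \<ge> 0"
proof (rule ccontr)
  assume neg: "\<not> f \<bullet> r \<ge> 0"
  have ray: "a - t *\<^sub>R r \<in> set_minus A (cone_R R)" if "t \<ge> 0" for t
    using a cone_R_ray[OF r that] unfolding set_minus_def by blast
  have "f \<bullet> a \<le> m" using bound ray[of 0] by simp
  define t where "t = (m - f \<bullet> a + 1) / (- (f \<bullet> r))"
  have "t \<ge> 0" using neg \<open>f \<bullet> a \<le> m\<close> unfolding t_def by (intro divide_nonneg_pos) auto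
  then have "f \<bullet> (a - t *\<^sub>R r) \<le> m" using bound ray by blast
  moreover have "t * (f \<bullet> r) = f \<bullet> a - m - 1" using neg by (simp add: t_def)
  ultimately show False by (simp add: inner_diff_right)
qed

lemma orthogonal_image_level:
  assumes u: "orthogonal_transformation u"
  shows "u ` {p\<in>P. f \<bullet> p = m} = {q\<in>u ` P. u f \<bullet> q = m}"
    and "(\<forall>p\<in>P. f \<bullet> p \<le> m) \<Longrightarrow> (\<forall>q\<in>u ` P. u f \<bullet> q \<le> m)"
proof -
  have inner: "u f \<bullet> u p = f \<bullet> p" for p
    using u unfolding orthogonal_transformation_def by blast
  show "u ` {p\<in>P. f \<bullet> p = m} = {q\<in>u ` P. u f \<bullet> q = m}"
    by (auto simp: inner)
  show "(\<forall>p\<in>P. f \<bullet> p \<le> m) \<Longrightarrow> (\<forall>q\<in>u ` P. u f \<bullet> q \<le> m)"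
    by (auto simp: inner)
qed

lemma is_face_orthogonal_image:
  fixes u :: "'a::euclidean_space \<Rightarrow> 'a"
  assumes u: "orthogonal_transformation u" and P: "u ` P = P"
  shows "is_face (u ` F) P \<longleftrightarrow> is_face F P"
proof -
  have image: "is_face (v ` G) P" if v: "orthogonal_transformation v" "v ` P = P" and G: "is_face G P"
    for v G
  proof (cases "G = P")
    case True then show ?thesis using v(2) by (simp add: is_face_def)
  next
    case False
    then obtain f m where f: "\<forall>p\<in>P. f \<bullet> p \<le> m" "G = {p\<in>P. f \<bullet> p = m}" and "G \<noteq> {}"
      using G unfolding is_face_support by blast
    then have "v ` G \<noteq> {}" by blast
    moreover have "\<forall>q\<in>P. v f \<bullet> q \<le> m" "v ` G = {q\<in>P. v f \<bullet> q = m}"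
      using orthogonal_image_level[OF v(1), of P f m] v(2) f by simp_all
    ultimately show ?thesis unfolding is_face_support by blast
  qed
  have "bij u" by (rule orthogonal_transformation_bij[OF u])
  then have inv: "inv u ` P = P" "inv u ` u ` F = F"
    using P by (metis bij_is_inj image_inv_f_f)+
  show ?thesis
    using image[OF u P, of F] image[OF orthogonal_transformation_inv[OF u] inv(1), of "u ` F"] inv(2)
    by auto
qed

section \<open>Weyl groups as products of simple reflections\<close>

fun weyl_word :: "('i \<Rightarrow> 'a::euclidean_space) \<Rightarrow> 'i list \<Rightarrow> 'a \<Rightarrow> 'a" where
  "weyl_word s [] = id"
| "weyl_word s (k # ks) = refl (s k) \<circ> weyl_word s ks"

lemma weyl_word_append: "weyl_word s (xs @ ys) = weyl_word s xs \<circ> weyl_word s ys"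
  by (induction xs) auto

lemma weyl_word_linear: "linear (weyl_word s ks)"
proof (induction ks)
  case (Cons k ks)
  then show ?case by (simp only: weyl_word.simps) (rule linear_compose[OF _ refl_linear])
qed (simp only: weyl_word.simps linear_id)

lemma weyl_group_words: "weyl_group s K = {weyl_word s ks | ks. set ks \<subseteq> K}"
proof safe
  fix w assume "w \<in> weyl_group s K"
  then show "\<exists>ks. w = weyl_word s ks \<and> set ks \<subseteq> K"
  proof (induction rule: weyl_group.induct)
    case weyl_id then show ?case by (intro exI[of _ "[]"]) auto
  next
    case (weyl_step w k)
    then obtain ks where "w = weyl_word s ks" "set ks \<subseteq> K" by blast
    then show ?case using weyl_step by (intro exI[of _ "k # ks"]) auto
  qed
next
  fix ks assume "set ks \<subseteq> K"
  then show "weyl_word s ks \<in> weyl_group s K"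
    by (induction ks) (auto intro: weyl_group.intros)
qed

lemma weyl_group_iff: "u \<in> weyl_group s K \<longleftrightarrow> (\<exists>ks. set ks \<subseteq> K \<and> u = weyl_word s ks)"
  by (auto simp: weyl_group_words)

lemma weyl_group_comp: "u \<in> weyl_group s K \<Longrightarrow> v \<in> weyl_group s K \<Longrightarrow> u \<circ> v \<in> weyl_group s K"
proof -
  assume "u \<in> weyl_group s K" "v \<in> weyl_group s K"
  then obtain ks ks' where "set ks \<subseteq> K" "u = weyl_word s ks" "set ks' \<subseteq> K" "v = weyl_word s ks'"
    by (auto simp: weyl_group_iff)
  then show ?thesis by (auto simp: weyl_group_iff weyl_word_append intro!: exI[of _ "ks @ ks'"])
qed

lemma weyl_group_mono: "K \<subseteq> L \<Longrightarrow> u \<in> weyl_group s K \<Longrightarrow> u \<in> weyl_group s L"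
  by (auto simp: weyl_group_iff)

lemma weyl_group_linear: "u \<in> weyl_group s K \<Longrightarrow> linear u"
  using weyl_word_linear by (auto simp: weyl_group_iff)

lemma weyl_orbit_self: "\<mu> \<in> weyl_orbit s K \<mu>"
  unfolding weyl_orbit_def using weyl_id[of s K] by (metis id_apply image_eqI)

lemma nat_property_change: "P 0 \<Longrightarrow> \<not> P n \<Longrightarrow> \<exists>i<n. P i \<and> \<not> P (Suc i)"
  by (induction n) (auto, metis less_Suc_eq)

section \<open>Coordinates with respect to the simple roots\<close>

locale based_root_system =
  fixes \<Phi> :: "'a::euclidean_space set" and I :: "'i set" and s :: "'i \<Rightarrow> 'a"
  assumes root_system: "root_system \<Phi>" and simple: "simple_roots \<Phi> I s"
begin

lemma finite_roots: "finite \<Phi>"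
  and span_roots: "span \<Phi> = UNIV"
  and roots_refl: "\<alpha> \<in> \<Phi> \<Longrightarrow> refl \<alpha> ` \<Phi> = \<Phi>"
  and roots_reduced: "\<alpha> \<in> \<Phi> \<Longrightarrow> c *\<^sub>R \<alpha> \<in> \<Phi> \<Longrightarrow> c = 1 \<or> c = -1"
  and root_nonzero: "\<beta> \<in> \<Phi> \<Longrightarrow> \<beta> \<noteq> 0"
  using root_system unfolding root_system_def by auto

lemma finite_I: "finite I"
  and inj_simple: "inj_on s I"
  and simple_root: "i \<in> I \<Longrightarrow> s i \<in> \<Phi>"
  and independent_simple: "independent (s ` I)"
  and root_expansion: "\<beta> \<in> \<Phi> \<Longrightarrow> \<exists>c. (\<forall>i\<in>I. c i \<in> \<int>) \<and> \<beta> = (\<Sum>i\<in>I. c i *\<^sub>R s i)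
                    \<and> ((\<forall>i\<in>I. c i \<ge> 0) \<or> (\<forall>i\<in>I. c i \<le> 0))"
  using simple unfolding simple_roots_def by auto

lemma simple_nonzero: "i \<in> I \<Longrightarrow> s i \<noteq> 0"
  using simple_root root_nonzero by blast

lemma simple_expansion_exists: "\<exists>c. x = (\<Sum>i\<in>I. c i *\<^sub>R s i)"
proof -
  have "\<Phi> \<subseteq> span (s ` I)"
  proof
    fix b assume "b \<in> \<Phi>"
    then obtain c where "b = (\<Sum>i\<in>I. c i *\<^sub>R s i)" using root_expansion by blast
    then show "b \<in> span (s ` I)"
      by (simp only:) (rule span_sum, rule span_scale, rule span_base, simp)
  qed
  then have "span \<Phi> \<subseteq> span (s ` I)" by (simp add: span_minimal)
  then have "x \<in> span (s ` I)" using span_roots by auto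
  then obtain u where "x = (\<Sum>v\<in>s ` I. u v *\<^sub>R v)"
    unfolding span_finite[OF finite_imageI[OF finite_I]] by blast
  also have "\<dots> = (\<Sum>i\<in>I. u (s i) *\<^sub>R s i)"
    using sum.reindex[OF inj_simple, of "\<lambda>v. u v *\<^sub>R v"] by simp
  finally show ?thesis by (rule exI[of _ "\<lambda>i. u (s i)"])
qed

lemma simple_expansion_unique:
  assumes "(\<Sum>i\<in>I. c i *\<^sub>R s i) = (\<Sum>i\<in>I. d i *\<^sub>R s i)" "i \<in> I"
  shows "c i = d i"
proof -
  define e where "e v = c (inv_into I s v) - d (inv_into I s v)" for v
  have "(\<Sum>v\<in>s ` I. e v *\<^sub>R v) = (\<Sum>i\<in>I. e (s i) *\<^sub>R s i)"
    using sum.reindex[OF inj_simple, of "\<lambda>v. e v *\<^sub>R v"] by simp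
  also have "\<dots> = (\<Sum>i\<in>I. (c i - d i) *\<^sub>R s i)"
    by (intro sum.cong) (auto simp: e_def inj_simple)
  also have "\<dots> = 0" using assms(1) by (simp add: scaleR_diff_left sum_subtractf)
  finally have "(\<Sum>v\<in>s ` I. e v *\<^sub>R v) = 0" .
  moreover have "\<forall>c. (\<Sum>v\<in>s ` I. c v *\<^sub>R v) = 0 \<longrightarrow> (\<forall>v\<in>s ` I. c v = 0)"
    using independent_simple[unfolded independent_explicit] by (rule conjunct2)
  ultimately have "e (s i) = 0" using assms(2) by blast
  then show ?thesis by (simp add: e_def inj_simple assms(2))
qed

definition coord :: "'a \<Rightarrow> 'i \<Rightarrow> real" where
  "coord x = (SOME c. x = (\<Sum>i\<in>I. c i *\<^sub>R s i))"

lemma coord_expansion: "x = (\<Sum>i\<in>I. coord x i *\<^sub>R s i)"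
  unfolding coord_def using simple_expansion_exists by (rule someI_ex)

lemma coord_eqI:
  assumes "x = (\<Sum>i\<in>I. c i *\<^sub>R s i)" "i \<in> I" shows "coord x i = c i"
proof -
  have "(\<Sum>i\<in>I. coord x i *\<^sub>R s i) = (\<Sum>i\<in>I. c i *\<^sub>R s i)"
    using assms(1) by (simp flip: coord_expansion)
  then show ?thesis using simple_expansion_unique assms(2) by blast
qed

lemma coord_add: "i \<in> I \<Longrightarrow> coord (x + y) i = coord x i + coord y i"
  by (rule coord_eqI) (simp_all add: scaleR_add_left sum.distrib flip: coord_expansion)

lemma coord_scale: "i \<in> I \<Longrightarrow> coord (a *\<^sub>R x) i = a * coord x i"
  by (rule coord_eqI) (simp_all flip: coord_expansion scaleR_scaleR scaleR_sum_right)

lemma coord_minus: "i \<in> I \<Longrightarrow> coord (- x) i = - coord x i"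
  using coord_scale[of i "-1" x] by simp

lemma coord_diff: "i \<in> I \<Longrightarrow> coord (x - y) i = coord x i - coord y i"
  using coord_add[of i x "- y"] coord_minus[of i y] by simp

lemma coord_zero: "i \<in> I \<Longrightarrow> coord 0 i = 0"
  using coord_scale[of i 0 0] by simp

lemma coord_simple: "j \<in> I \<Longrightarrow> i \<in> I \<Longrightarrow> coord (s j) i = (if i = j then 1 else 0)"
proof (rule coord_eqI)
  assume "j \<in> I"
  have "(\<Sum>i\<in>I. (if i = j then 1 else 0) *\<^sub>R s i) = (\<Sum>i\<in>I. if i = j then s i else 0)"
    by (rule sum.cong) auto
  also have "\<dots> = s j" using \<open>j \<in> I\<close> finite_I by simp
  finally show "s j = (\<Sum>i\<in>I. (if i = j then 1 else 0) *\<^sub>R s i)" ..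
qed

lemma coord_sum: "finite A \<Longrightarrow> i \<in> I \<Longrightarrow> coord (\<Sum>a\<in>A. f a) i = (\<Sum>a\<in>A. coord (f a) i)"
  by (induction A rule: finite_induct) (simp_all add: coord_zero coord_add)

lemma inner_coord: "g \<bullet> x = (\<Sum>i\<in>I. coord x i * (g \<bullet> s i))"
  by (subst coord_expansion[of x]) (simp add: inner_sum_right)

lemma coord_refl:
  "j \<in> I \<Longrightarrow> i \<in> I \<Longrightarrow> coord (refl (s j) x) i = coord x i - (if i = j then coroot_eval x (s j) else 0)"
  by (simp add: refl_eq coord_diff coord_scale coord_simple)

definition positive :: "'a \<Rightarrow> bool" where
  "positive x \<longleftrightarrow> (\<forall>i\<in>I. coord x i \<ge> 0)"

definition simple_cone :: "'i set \<Rightarrow> 'a set" where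
  "simple_cone K = {x. positive x \<and> (\<forall>i\<in>I - K. coord x i = 0)}"

lemma positive_simple: "j \<in> I \<Longrightarrow> positive (s j)"
  by (auto simp: positive_def coord_simple)

lemma simple_in_cone: "j \<in> K \<Longrightarrow> j \<in> I \<Longrightarrow> s j \<in> simple_cone K"
  by (auto simp: simple_cone_def positive_simple coord_simple)

lemma root_positive_or_negative:
  assumes "\<beta> \<in> \<Phi>" "\<not> positive (- \<beta>)" shows "positive \<beta>"
proof -
  obtain c where c: "\<beta> = (\<Sum>i\<in>I. c i *\<^sub>R s i)" "(\<forall>i\<in>I. c i \<ge> 0) \<or> (\<forall>i\<in>I. c i \<le> 0)"
    using root_expansion[OF assms(1)] by blast
  have "\<forall>i\<in>I. coord \<beta> i = c i" using coord_eqI[OF c(1)] by blast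
  then show ?thesis using c(2) assms(2) unfolding positive_def by (auto simp: coord_minus)
qed

lemma positive_antisym:
  assumes "positive x" "positive (- x)" shows "x = 0"
proof -
  have "\<forall>i\<in>I. coord x i = 0"
    using assms coord_minus unfolding positive_def by force
  then have "(\<Sum>i\<in>I. coord x i *\<^sub>R s i) = 0" by simp
  then show ?thesis by (simp flip: coord_expansion)
qed

lemma simple_cone_add: "x \<in> simple_cone K \<Longrightarrow> y \<in> simple_cone K \<Longrightarrow> x + y \<in> simple_cone K"
  by (auto simp: simple_cone_def positive_def coord_add)

lemma simple_cone_scale: "x \<in> simple_cone K \<Longrightarrow> a \<ge> 0 \<Longrightarrow> a *\<^sub>R x \<in> simple_cone K"
  by (auto simp: simple_cone_def positive_def coord_scale)

lemma simple_cone_zero: "0 \<in> simple_cone K"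
  by (auto simp: simple_cone_def positive_def coord_zero)

lemma simple_cone_mono: "K \<subseteq> L \<Longrightarrow> simple_cone K \<subseteq> simple_cone L"
  unfolding simple_cone_def by auto

lemma simple_cone_Int: "x \<in> simple_cone K \<Longrightarrow> x \<in> simple_cone L \<Longrightarrow> x \<in> simple_cone (K \<inter> L)"
  unfolding simple_cone_def by auto

lemma pos_roots_eq: "pos_roots \<Phi> I s K = \<Phi> \<inter> simple_cone K"
proof safe
  fix b assume "b \<in> pos_roots \<Phi> I s K"
  then obtain c where "b \<in> \<Phi>" "\<forall>i\<in>I. c i \<in> \<int> \<and> c i \<ge> 0" "\<forall>i\<in>I-K. c i = 0"
    "b = (\<Sum>i\<in>I. c i *\<^sub>R s i)"
    unfolding pos_roots_def by blast
  then show "b \<in> \<Phi>" "b \<in> simple_cone K"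
    using coord_eqI[of b c] by (auto simp: simple_cone_def positive_def)
next
  fix b assume b: "b \<in> \<Phi>" "b \<in> simple_cone K"
  then obtain c where c: "\<forall>i\<in>I. c i \<in> \<int>" "b = (\<Sum>i\<in>I. c i *\<^sub>R s i)"
    using root_expansion by blast
  show "b \<in> pos_roots \<Phi> I s K" unfolding pos_roots_def
    using b c coord_eqI[OF c(2)] by (auto simp: simple_cone_def positive_def intro!: exI[of _ c])
qed

lemma simple_cone_inner:
  assumes x: "x \<in> simple_cone K" and g: "\<forall>k\<in>K. g \<bullet> s k \<ge> 0"
  shows "g \<bullet> x \<ge> 0"
    and "g \<bullet> x = 0 \<Longrightarrow> x \<in> simple_cone {k\<in>K. g \<bullet> s k = 0}"
proof -
  have expand: "g \<bullet> x = (\<Sum>i\<in>I. coord x i * (g \<bullet> s i))" by (rule inner_coord)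
  have terms: "\<forall>i\<in>I. coord x i * (g \<bullet> s i) \<ge> 0"
  proof
    fix i assume "i \<in> I"
    then show "coord x i * (g \<bullet> s i) \<ge> 0"
      using x g unfolding simple_cone_def positive_def by (cases "i \<in> K") simp_all
  qed
  then show "g \<bullet> x \<ge> 0" unfolding expand by (intro sum_nonneg) blast
  assume "g \<bullet> x = 0"
  then have "(\<Sum>i\<in>I. coord x i * (g \<bullet> s i)) = 0" unfolding expand .
  then have "\<forall>i\<in>I. coord x i * (g \<bullet> s i) = 0"
    using sum_nonneg_eq_0_iff[OF finite_I, of "\<lambda>i. coord x i * (g \<bullet> s i)"] terms by simp
  then show "x \<in> simple_cone {k\<in>K. g \<bullet> s k = 0}" using x unfolding simple_cone_def by auto
qed

lemma simple_cone_orthogonal: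
  assumes "x \<in> simple_cone K" "\<forall>k\<in>K. g \<bullet> s k = 0" shows "g \<bullet> x = 0"
proof -
  have "g \<bullet> x = (\<Sum>i\<in>I. coord x i * (g \<bullet> s i))" by (rule inner_coord)
  also have "\<dots> = 0" using assms unfolding simple_cone_def by (intro sum.neutral) auto
  finally show ?thesis .
qed

section \<open>The Weyl group \<open>W\<^sub>K\<close>\<close>

lemma weyl_word_orthogonal: "set ks \<subseteq> I \<Longrightarrow> orthogonal_transformation (weyl_word s ks)"
proof (induction ks)
  case (Cons k ks)
  then show ?case using orthogonal_refl[OF simple_nonzero[of k]]
    by (simp only: weyl_word.simps) (rule orthogonal_transformation_compose; simp)
qed (simp add: id_def)

lemma weyl_word_roots: "set ks \<subseteq> I \<Longrightarrow> x \<in> \<Phi> \<Longrightarrow> weyl_word s ks x \<in> \<Phi>"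
proof (induction ks)
  case (Cons k ks)
  then have "refl (s k) (weyl_word s ks x) \<in> refl (s k) ` \<Phi>" by simp
  then show ?case using Cons.prems roots_refl[OF simple_root, of k] by simp
qed simp

text \<open>Simple reflections are involutions, so the reversed word represents the inverse.\<close>
lemma weyl_word_rev: "set ks \<subseteq> I \<Longrightarrow> weyl_word s (rev ks) \<circ> weyl_word s ks = id"
proof (induction ks)
  case (Cons k ks)
  have "weyl_word s (rev (k # ks)) \<circ> weyl_word s (k # ks)
      = weyl_word s (rev ks) \<circ> (refl (s k) \<circ> refl (s k)) \<circ> weyl_word s ks"
    by (simp add: weyl_word_append comp_assoc)
  also have "refl (s k) \<circ> refl (s k) = id" using Cons.prems by (auto simp: refl_invol simple_nonzero)
  finally show ?case using Cons by simp
qed simp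

lemma weyl_word_coord_outside:
  "set ks \<subseteq> I \<Longrightarrow> i \<in> I \<Longrightarrow> i \<notin> set ks \<Longrightarrow> coord (weyl_word s ks x) i = coord x i"
  by (induction ks) (auto simp: coord_refl)

context
  fixes K assumes K: "K \<subseteq> I"
begin

lemma weyl_word_of:
  assumes "u \<in> weyl_group s K"
  obtains ks where "set ks \<subseteq> I" "set ks \<subseteq> K" "u = weyl_word s ks"
  using assms K by (auto simp: weyl_group_iff)

lemma weyl_orthogonal: "u \<in> weyl_group s K \<Longrightarrow> orthogonal_transformation u"
  by (elim weyl_word_of) (simp add: weyl_word_orthogonal)

lemma weyl_inner: "u \<in> weyl_group s K \<Longrightarrow> u x \<bullet> u y = x \<bullet> y"
  using weyl_orthogonal unfolding orthogonal_transformation_def by blast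

lemma weyl_roots: "u \<in> weyl_group s K \<Longrightarrow> x \<in> \<Phi> \<Longrightarrow> u x \<in> \<Phi>"
  by (elim weyl_word_of) (simp add: weyl_word_roots)

lemma weyl_coord_outside: "u \<in> weyl_group s K \<Longrightarrow> i \<in> I - K \<Longrightarrow> coord (u x) i = coord x i"
proof -
  assume u: "u \<in> weyl_group s K" and i: "i \<in> I - K"
  obtain ks where ks: "set ks \<subseteq> I" "set ks \<subseteq> K" "u = weyl_word s ks"
    using weyl_word_of[OF u] by blast
  have "i \<notin> set ks" using ks(2) i by blast
  then show ?thesis using weyl_word_coord_outside[OF ks(1)] i ks(3) by simp
qed

lemma weyl_inverse:
  assumes "u \<in> weyl_group s K"
  obtains u' where "u' \<in> weyl_group s K" "\<And>x. u' (u x) = x" "\<And>x. u (u' x) = x"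
proof -
  obtain ks where ks: "set ks \<subseteq> I" "set ks \<subseteq> K" "u = weyl_word s ks"
    using weyl_word_of[OF assms] by blast
  have "weyl_word s (rev ks) \<in> weyl_group s K"
    using ks(2) by (auto simp: weyl_group_iff intro!: exI[of _ "rev ks"])
  moreover have "weyl_word s (rev ks) \<circ> u = id" "u \<circ> weyl_word s (rev ks) = id"
    using ks(1,3) weyl_word_rev[of ks] weyl_word_rev[of "rev ks"] by simp_all
  ultimately show ?thesis by (intro that) (auto simp: fun_eq_iff)
qed

text \<open>\<open>W\<^sub>K\<close> acts faithfully on the finite set \<open>\<Phi>\<close>, which spans the space.\<close>
lemma finite_weyl: "finite (weyl_group s K)"
proof -
  let ?r = "\<lambda>u. restrict u \<Phi>"
  have "?r ` weyl_group s K \<subseteq> Pi\<^sub>E \<Phi> (\<lambda>_. \<Phi>)"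
    using weyl_roots by auto
  then have fin: "finite (?r ` weyl_group s K)"
    by (rule finite_subset) (simp add: finite_PiE finite_roots)
  have "inj_on ?r (weyl_group s K)"
  proof (rule inj_onI)
    fix u v assume uv: "u \<in> weyl_group s K" "v \<in> weyl_group s K" "?r u = ?r v"
    then have "\<forall>x\<in>\<Phi>. u x = v x" by (metis restrict_apply')
    then have "\<forall>x\<in>span \<Phi>. u x = v x"
      using linear_eq_on_span[OF weyl_group_linear[OF uv(1)] weyl_group_linear[OF uv(2)]] by blast
    then show "u = v" using span_roots by auto
  qed
  then show ?thesis using fin finite_imageD by blast
qed

lemma finite_weyl_orbit: "finite (weyl_orbit s K x)"
  unfolding weyl_orbit_def using finite_weyl by simp

lemma weyl_invariant:
  assumes sub: "\<And>u. u \<in> weyl_group s K \<Longrightarrow> u ` X \<subseteq> X" and u: "u \<in> weyl_group s K"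
  shows "u ` X = X"
proof -
  obtain u' where u': "u' \<in> weyl_group s K" "\<And>x. u (u' x) = x" using weyl_inverse[OF u] by metis
  have "X = u ` (u' ` X)" using u'(2) by (simp add: image_comp)
  also have "\<dots> \<subseteq> u ` X" using sub[OF u'(1)] by auto
  finally show ?thesis using sub[OF u] by auto
qed

lemma weyl_orbit_invariant: "u \<in> weyl_group s K \<Longrightarrow> u ` weyl_orbit s K x = weyl_orbit s K x"
proof (rule weyl_invariant)
  fix v assume v: "v \<in> weyl_group s K"
  show "v ` weyl_orbit s K x \<subseteq> weyl_orbit s K x"
  proof
    fix y assume "y \<in> v ` weyl_orbit s K x"
    then obtain w where "w \<in> weyl_group s K" "y = (v \<circ> w) x" unfolding weyl_orbit_def by auto
    then show "y \<in> weyl_orbit s K x" using weyl_group_comp[OF v] unfolding weyl_orbit_def by blast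
  qed
qed

lemma weyl_orbit_eq:
  assumes "y \<in> weyl_orbit s K x" shows "weyl_orbit s K y = weyl_orbit s K x"
proof -
  have sub: "weyl_orbit s K (u z) \<subseteq> weyl_orbit s K z" if u: "u \<in> weyl_group s K" for u z
  proof
    fix y assume "y \<in> weyl_orbit s K (u z)"
    then obtain v where "v \<in> weyl_group s K" "y = (v \<circ> u) z" unfolding weyl_orbit_def by auto
    then show "y \<in> weyl_orbit s K z" using weyl_group_comp[OF _ u] unfolding weyl_orbit_def by blast
  qed
  obtain u where u: "u \<in> weyl_group s K" "y = u x" using assms unfolding weyl_orbit_def by blast
  obtain u' where u': "u' \<in> weyl_group s K" "\<And>x. u' (u x) = x" using weyl_inverse[OF u(1)] by metis
  have "weyl_orbit s K y \<subseteq> weyl_orbit s K x" using sub[OF u(1), of x] u(2) by simp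
  moreover have "weyl_orbit s K x \<subseteq> weyl_orbit s K y" using sub[OF u'(1), of y] u(2) u'(2) by simp
  ultimately show ?thesis ..
qed

end

section \<open>Reduced words\<close>

lemma simple_refl_negates_only_simple:
  assumes \<gamma>: "\<gamma> \<in> \<Phi>" "positive \<gamma>" and j: "j \<in> I" and neg: "positive (- refl (s j) \<gamma>)"
  shows "\<gamma> = s j"
proof -
  have zero: "coord \<gamma> i = 0" if "i \<in> I" "i \<noteq> j" for i
    using \<gamma>(2) neg that j unfolding positive_def by (force simp: coord_minus coord_refl)
  have "\<gamma> = (\<Sum>i\<in>I. coord \<gamma> i *\<^sub>R s i)" by (rule coord_expansion)
  also have "\<dots> = (\<Sum>i\<in>I. if i = j then coord \<gamma> j *\<^sub>R s j else 0)"
    by (rule sum.cong) (auto simp: zero)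
  also have "\<dots> = coord \<gamma> j *\<^sub>R s j" using j finite_I by simp
  finally have \<gamma>_eq: "\<gamma> = coord \<gamma> j *\<^sub>R s j" .
  then have "coord \<gamma> j = 1 \<or> coord \<gamma> j = -1" using roots_reduced[OF simple_root[OF j]] \<gamma>(1) by metis
  moreover have "coord \<gamma> j \<ge> 0" using \<gamma>(2) j by (auto simp: positive_def)
  ultimately show ?thesis using \<gamma>_eq by auto
qed

lemma simple_refl_exchange:
  assumes ys: "set ys \<subseteq> I" and eq: "weyl_word s ys (s j) = s k"
  shows "refl (s k) \<circ> weyl_word s ys = weyl_word s ys \<circ> refl (s j)"
  using refl_conj[OF weyl_word_orthogonal[OF ys], of "s j"] eq by (simp add: fun_eq_iff)

definition reduced :: "'i set \<Rightarrow> 'i list \<Rightarrow> bool" where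
  "reduced K ks \<longleftrightarrow> set ks \<subseteq> K \<and>
     (\<forall>ks'. set ks' \<subseteq> K \<and> weyl_word s ks' = weyl_word s ks \<longrightarrow> length ks \<le> length ks')"

lemma reduced_exists:
  assumes "u \<in> weyl_group s K"
  obtains ks where "reduced K ks" "u = weyl_word s ks"
proof -
  obtain ks0 where "set ks0 \<subseteq> K \<and> u = weyl_word s ks0" using assms by (auto simp: weyl_group_iff)
  then obtain ks where "set ks \<subseteq> K \<and> u = weyl_word s ks"
    "\<forall>ks'. set ks' \<subseteq> K \<and> u = weyl_word s ks' \<longrightarrow> length ks \<le> length ks'"
    using ex_has_least_nat[of "\<lambda>ks. set ks \<subseteq> K \<and> u = weyl_word s ks" ks0 length] by blast
  then show ?thesis by (intro that[of ks]) (auto simp: reduced_def)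
qed

lemma reduced_prefix:
  assumes "reduced K (xs @ ys)" shows "reduced K xs"
  unfolding reduced_def
proof (intro conjI allI impI)
  show "set xs \<subseteq> K" using assms by (simp add: reduced_def)
  fix xs' assume xs': "set xs' \<subseteq> K \<and> weyl_word s xs' = weyl_word s xs"
  then have "set (xs' @ ys) \<subseteq> K \<and> weyl_word s (xs' @ ys) = weyl_word s (xs @ ys)"
    using assms by (simp add: reduced_def weyl_word_append)
  then show "length xs \<le> length xs'" using assms unfolding reduced_def by fastforce
qed

text \<open>Otherwise, following \<open>\<alpha>\<^sub>j\<close> along the suffixes of \<open>x\<close>, it turns negative at some
  simple reflection \<open>s\<^sub>k\<close>, where it must be \<open>\<alpha>\<^sub>k\<close>; then \<open>s\<^sub>k\<close> and \<open>s\<^sub>j\<close> cancel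
  by the exchange lemma above, giving a shorter word.\<close>
lemma reduced_last_positive:
  assumes K: "K \<subseteq> I" and red: "reduced K (xs @ [j])"
  shows "positive (weyl_word s xs (s j))"
proof (rule ccontr)
  assume not_pos: "\<not> positive (weyl_word s xs (s j))"
  have jI: "j \<in> I" and xsI: "set xs \<subseteq> I" using red K by (auto simp: reduced_def)
  define \<gamma> where "\<gamma> n = weyl_word s (drop n xs) (s j)" for n
  have \<gamma>_root: "\<gamma> n \<in> \<Phi>" for n
    unfolding \<gamma>_def using xsI simple_root[OF jI] by (intro weyl_word_roots) (auto dest: in_set_dropD)
  have "positive (- \<gamma> 0)" using root_positive_or_negative[OF \<gamma>_root, of 0] not_pos by (auto simp: \<gamma>_def)
  moreover have "\<not> positive (- \<gamma> (length xs))"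
    using positive_antisym[OF positive_simple[OF jI]] simple_nonzero[OF jI] by (auto simp: \<gamma>_def)
  ultimately obtain n where n: "n < length xs" "positive (- \<gamma> n)" "\<not> positive (- \<gamma> (Suc n))"
    using nat_property_change[of "\<lambda>n. positive (- \<gamma> n)"] by blast
  let ?k = "xs ! n" and ?y = "weyl_word s (drop (Suc n) xs)"
  have kI: "?k \<in> I" using n(1) xsI by auto
  have drop_n: "drop n xs = ?k # drop (Suc n) xs" using n(1) by (simp add: Cons_nth_drop_Suc)
  have "\<gamma> n = refl (s ?k) (\<gamma> (Suc n))" unfolding \<gamma>_def by (subst drop_n) simp
  then have "\<gamma> (Suc n) = s ?k"
    using simple_refl_negates_only_simple[OF \<gamma>_root root_positive_or_negative[OF \<gamma>_root n(3)] kI] n(2)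
    by simp
  then have exchange: "refl (s ?k) \<circ> ?y = ?y \<circ> refl (s j)"
    using xsI by (intro simple_refl_exchange) (auto simp: \<gamma>_def dest: in_set_dropD)
  have "weyl_word s (xs @ [j]) = weyl_word s (take n xs) \<circ> weyl_word s (drop n xs) \<circ> refl (s j)"
    by (metis append_take_drop_id weyl_word_append weyl_word.simps comp_id)
  also have "\<dots> = weyl_word s (take n xs) \<circ> (refl (s ?k) \<circ> ?y) \<circ> refl (s j)"
    by (subst drop_n) simp
  also have "\<dots> = weyl_word s (take n xs) \<circ> ?y \<circ> (refl (s j) \<circ> refl (s j))"
    by (simp only: exchange comp_assoc)
  also have "refl (s j) \<circ> refl (s j) = id" by (auto simp: refl_invol simple_nonzero[OF jI])
  finally have "weyl_word s (xs @ [j]) = weyl_word s (take n xs @ drop (Suc n) xs)"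
    by (simp add: weyl_word_append fun_eq_iff)
  moreover have "set (take n xs @ drop (Suc n) xs) \<subseteq> K"
    using red by (auto simp: reduced_def dest: in_set_takeD in_set_dropD)
  ultimately have "length (xs @ [j]) \<le> length (take n xs @ drop (Suc n) xs)"
    using red unfolding reduced_def by metis
  then show False using n(1) by simp
qed

lemma weyl_reduced_induct:
  assumes K: "K \<subseteq> I" and u: "u \<in> weyl_group s K" and base: "P id"
    and step: "\<And>v j. v \<in> weyl_group s K \<Longrightarrow> j \<in> K \<Longrightarrow> v (s j) \<in> \<Phi> \<Longrightarrow>
                   v (s j) \<in> simple_cone K \<Longrightarrow> P v \<Longrightarrow> P (v \<circ> refl (s j))"
  shows "P u"
proof -
  have "reduced K ks \<Longrightarrow> P (weyl_word s ks)" for ks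
  proof (induction ks rule: rev_induct)
    case Nil then show ?case using base by (simp add: id_def)
  next
    case (snoc j xs)
    let ?v = "weyl_word s xs"
    have xsK: "set xs \<subseteq> K" and jK: "j \<in> K" using snoc.prems by (auto simp: reduced_def)
    then have v: "?v \<in> weyl_group s K" and jI: "j \<in> I" using K by (auto simp: weyl_group_iff)
    have root: "?v (s j) \<in> \<Phi>" using xsK K simple_root[OF jI] by (intro weyl_word_roots) auto
    have "coord (?v (s j)) i = 0" if "i \<in> I - K" for i
      using weyl_coord_outside[OF K v that] coord_simple[OF jI] that jK by auto
    then have cone: "?v (s j) \<in> simple_cone K"
      using reduced_last_positive[OF K snoc.prems] unfolding simple_cone_def by blast
    have "P ?v" using snoc.IH reduced_prefix[OF snoc.prems] by blast
    then have "P (?v \<circ> refl (s j))" by (rule step[OF v jK root cone])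
    then show ?case by (simp only: weyl_word_append weyl_word.simps comp_id)
  qed
  then show ?thesis using reduced_exists[OF u] by metis
qed

section \<open>Dominant weights\<close>

lemma dominant_minus_conjugate:
  assumes K: "K \<subseteq> I" and dom: "\<forall>k\<in>K. coroot_eval lam (s k) \<ge> 0" and u: "u \<in> weyl_group s K"
  shows "lam - u lam \<in> simple_cone K"
proof (rule weyl_reduced_induct[OF K u, where P = "\<lambda>u. lam - u lam \<in> simple_cone K"])
  show "lam - id lam \<in> simple_cone K" using simple_cone_zero by simp
next
  fix v j assume v: "v \<in> weyl_group s K" and j: "j \<in> K" and cone: "v (s j) \<in> simple_cone K"
    and IH: "lam - v lam \<in> simple_cone K"
  let ?c = "coroot_eval lam (s j)"
  have "(v \<circ> refl (s j)) lam = v lam - ?c *\<^sub>R v (s j)"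
    using weyl_group_linear[OF v] by (simp add: refl_eq linear_diff linear_scale)
  then have eq: "lam - (v \<circ> refl (s j)) lam = (lam - v lam) + ?c *\<^sub>R v (s j)" by simp
  have "?c *\<^sub>R v (s j) \<in> simple_cone K" using cone j dom by (intro simple_cone_scale) auto
  then show "lam - (v \<circ> refl (s j)) lam \<in> simple_cone K"
    unfolding eq by (rule simple_cone_add[OF IH])
qed

definition height :: "'a \<Rightarrow> real" where
  "height x = (\<Sum>i\<in>I. coord x i)"

text \<open>Every root of \<open>simple_cone L\<close> is \<open>W\<^sub>L\<close>-conjugate to a simple root \<open>\<alpha>\<^sub>k\<close>, \<open>k \<in> L\<close>: a
  non-simple such root pairs positively with some \<open>\<alpha>\<^sub>i\<close>, \<open>i \<in> L\<close>, and \<open>s\<^sub>i\<close> lowers its height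
  while keeping it a root of \<open>simple_cone L\<close>.\<close>
lemma root_conjugate_simple:
  assumes L: "L \<subseteq> I" and \<gamma>: "\<gamma> \<in> \<Phi>" "\<gamma> \<in> simple_cone L"
  shows "\<exists>x\<in>weyl_group s L. \<exists>k\<in>L. \<gamma> = x (s k)"
  using \<gamma>
proof (induction "card {\<beta>\<in>\<Phi>. height \<beta> < height \<gamma>}" arbitrary: \<gamma> rule: less_induct)
  case less
  show ?case
  proof (cases "\<exists>k\<in>L. \<gamma> = s k")
    case True
    then show ?thesis using weyl_id[of s L] by (metis id_apply)
  next
    case not_simple: False
    have "0 < \<gamma> \<bullet> \<gamma>" using root_nonzero[OF less.prems(1)] by simp
    also have "\<gamma> \<bullet> \<gamma> = (\<Sum>i\<in>I. coord \<gamma> i * (\<gamma> \<bullet> s i))" by (rule inner_coord)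
    finally have "(\<Sum>i\<in>I. coord \<gamma> i * (\<gamma> \<bullet> s i)) > 0" .
    then have "\<not> (\<forall>i\<in>I. coord \<gamma> i * (\<gamma> \<bullet> s i) \<le> 0)"
      using sum_nonpos[of I "\<lambda>i. coord \<gamma> i * (\<gamma> \<bullet> s i)"] by force
    then obtain i where i: "i \<in> I" "coord \<gamma> i * (\<gamma> \<bullet> s i) > 0" by (auto simp: not_le)
    have "coord \<gamma> i \<ge> 0" using less.prems(2) i(1) by (auto simp: simple_cone_def positive_def)
    then have "coord \<gamma> i > 0" and pairing: "\<gamma> \<bullet> s i > 0" using i(2) by (auto simp: zero_less_mult_iff)
    then have iL: "i \<in> L" using less.prems(2) i(1) unfolding simple_cone_def by force
    let ?c = "coroot_eval \<gamma> (s i)"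
    have c: "?c > 0" using pairing simple_nonzero[OF i(1)] by (simp add: coroot_eval_def)
    define \<gamma>' where "\<gamma>' = refl (s i) \<gamma>"
    have root': "\<gamma>' \<in> \<Phi>" unfolding \<gamma>'_def using roots_refl[OF simple_root[OF i(1)]] less.prems(1) by blast
    have "\<not> positive (- \<gamma>')"
      using simple_refl_negates_only_simple[OF less.prems(1) _ i(1)] less.prems(2) not_simple iL
      unfolding \<gamma>'_def simple_cone_def by blast
    then have "positive \<gamma>'" using root_positive_or_negative[OF root'] by blast
    moreover have coord': "coord \<gamma>' k = coord \<gamma> k - (if k = i then ?c else 0)" if "k \<in> I" for k
      unfolding \<gamma>'_def using coord_refl[OF i(1) that] .
    ultimately have cone': "\<gamma>' \<in> simple_cone L"
      using less.prems(2) iL unfolding simple_cone_def by auto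
    have "height \<gamma>' = (\<Sum>k\<in>I. coord \<gamma> k - (if k = i then ?c else 0))"
      unfolding height_def by (rule sum.cong) (simp_all add: coord')
    also have "\<dots> = height \<gamma> - ?c"
      unfolding height_def using finite_I i(1) by (simp add: sum_subtractf)
    finally have lower: "height \<gamma>' < height \<gamma>" using c by simp
    then have "{\<beta>\<in>\<Phi>. height \<beta> < height \<gamma>'} \<subseteq> {\<beta>\<in>\<Phi>. height \<beta> < height \<gamma>}"
      by auto
    moreover have "\<gamma>' \<in> {\<beta>\<in>\<Phi>. height \<beta> < height \<gamma>}" "\<gamma>' \<notin> {\<beta>\<in>\<Phi>. height \<beta> < height \<gamma>'}"
      using lower root' by auto
    ultimately have "{\<beta>\<in>\<Phi>. height \<beta> < height \<gamma>'} \<subset> {\<beta>\<in>\<Phi>. height \<beta> < height \<gamma>}"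
      by blast
    then have "card {\<beta>\<in>\<Phi>. height \<beta> < height \<gamma>'} < card {\<beta>\<in>\<Phi>. height \<beta> < height \<gamma>}"
      by (rule psubset_card_mono[rotated]) (simp add: finite_roots)
    then obtain x k where x: "x \<in> weyl_group s L" "k \<in> L" "\<gamma>' = x (s k)"
      using less.hyps root' cone' by blast
    have "\<gamma> = (refl (s i) \<circ> x) (s k)"
      using x(3) refl_invol[OF simple_nonzero[OF i(1)]] unfolding \<gamma>'_def by (metis comp_apply)
    then show ?thesis using weyl_step[OF x(1) iL] x(2) by blast
  qed
qed

lemma root_refl_in_weyl:
  assumes L: "L \<subseteq> I" and \<gamma>: "\<gamma> \<in> \<Phi>" "\<gamma> \<in> simple_cone L"
  shows "refl \<gamma> \<in> weyl_group s L"
proof -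
  obtain x k where x: "x \<in> weyl_group s L" "k \<in> L" "\<gamma> = x (s k)"
    using root_conjugate_simple[OF assms] by blast
  obtain x' where x': "x' \<in> weyl_group s L" "\<And>y. x (x' y) = y"
    using weyl_inverse[OF L x(1)] by metis
  have "refl \<gamma> y = (x \<circ> refl (s k) \<circ> x') y" for y
    using refl_conj[OF weyl_orthogonal[OF L x(1)], of "s k" "x' y"] x(3) x'(2) by simp
  then have "refl \<gamma> = x \<circ> refl (s k) \<circ> x'" by (rule ext)
  then show ?thesis
    using weyl_group_comp[OF weyl_group_comp[OF x(1) weyl_step[OF weyl_id x(2)]] x'(1)] by simp
qed

lemma dominant_level_orbit:
  assumes K: "K \<subseteq> I" and dom: "\<forall>k\<in>K. coroot_eval lam (s k) \<ge> 0"
    and g: "\<forall>k\<in>K. g \<bullet> s k \<ge> 0" and u: "u \<in> weyl_group s K"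
    and level: "g \<bullet> (lam - u lam) = 0"
  shows "u lam \<in> weyl_orbit s {k\<in>K. g \<bullet> s k = 0} lam"
proof -
  let ?L = "{k\<in>K. g \<bullet> s k = 0}"
  have LI: "?L \<subseteq> I" using K by auto
  have "g \<bullet> (lam - u lam) = 0 \<longrightarrow> u lam \<in> weyl_orbit s ?L lam"
  proof (rule weyl_reduced_induct[OF K u])
    show "g \<bullet> (lam - id lam) = 0 \<longrightarrow> id lam \<in> weyl_orbit s ?L lam"
      using weyl_orbit_self by simp
  next
    fix v j assume v: "v \<in> weyl_group s K" and j: "j \<in> K" and root: "v (s j) \<in> \<Phi>"
      and cone: "v (s j) \<in> simple_cone K"
      and IH: "g \<bullet> (lam - v lam) = 0 \<longrightarrow> v lam \<in> weyl_orbit s ?L lam"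
    let ?c = "coroot_eval lam (s j)"
    have uv: "(v \<circ> refl (s j)) lam = v lam - ?c *\<^sub>R v (s j)"
      using weyl_group_linear[OF v] by (simp add: refl_eq linear_diff linear_scale)
    have split: "g \<bullet> (lam - (v \<circ> refl (s j)) lam) = g \<bullet> (lam - v lam) + ?c * (g \<bullet> v (s j))"
      unfolding uv by (simp add: algebra_simps)
    have "g \<bullet> (lam - v lam) \<ge> 0"
      using simple_cone_inner(1)[OF dominant_minus_conjugate[OF K dom v] g] .
    moreover have "?c * (g \<bullet> v (s j)) \<ge> 0"
      using dom j simple_cone_inner(1)[OF cone g] by simp
    ultimately have zero: "g \<bullet> (lam - (v \<circ> refl (s j)) lam) = 0 \<Longrightarrow>
        g \<bullet> (lam - v lam) = 0 \<and> (?c = 0 \<or> g \<bullet> v (s j) = 0)"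
      unfolding split mult_eq_0_iff[symmetric] by linarith
    moreover have "(v \<circ> refl (s j)) lam \<in> weyl_orbit s ?L lam"
      if "g \<bullet> v (s j) = 0" "v lam \<in> weyl_orbit s ?L lam"
    proof -
      have "refl (v (s j)) \<in> weyl_group s ?L"
        using root_refl_in_weyl[OF LI root] simple_cone_inner(2)[OF cone g that(1)] by blast
      moreover have "(v \<circ> refl (s j)) lam = refl (v (s j)) (v lam)"
        using refl_conj[OF weyl_orthogonal[OF K v]] by simp
      ultimately show ?thesis using weyl_orbit_invariant[OF LI] that(2) by blast
    qed
    ultimately show "g \<bullet> (lam - (v \<circ> refl (s j)) lam) = 0 \<longrightarrow>
        (v \<circ> refl (s j)) lam \<in> weyl_orbit s ?L lam"
      using IH uv by auto
  qed
  then show ?thesis using level by blast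
qed

lemma functional_on_simple: "\<exists>g. \<forall>i\<in>I. g \<bullet> s i = h i"
proof -
  define \<phi> where "\<phi> x = (\<Sum>k\<in>I. coord x k * h k)" for x
  define g where "g = (\<Sum>b\<in>Basis. \<phi> b *\<^sub>R b)"
  have g_inner: "g \<bullet> y = \<phi> y" for y
  proof -
    have "g \<bullet> y = (\<Sum>b\<in>Basis. \<phi> b * (y \<bullet> b))" unfolding g_def inner_sum_left inner_scaleR_left
      by (rule sum.cong) (auto simp: inner_commute)
    also have "\<dots> = (\<Sum>k\<in>I. \<Sum>b\<in>Basis. (y \<bullet> b) * coord b k * h k)" unfolding \<phi>_def
      by (simp add: sum_distrib_left sum_distrib_right mult.commute mult.left_commute sum.swap[of _ Basis])
    also have "\<dots> = (\<Sum>k\<in>I. coord (\<Sum>b\<in>Basis. (y \<bullet> b) *\<^sub>R b) k * h k)"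
      by (rule sum.cong) (auto simp: coord_sum coord_scale sum_distrib_right)
    also have "\<dots> = \<phi> y" unfolding \<phi>_def euclidean_representation ..
    finally show ?thesis .
  qed
  have "g \<bullet> s i = h i" if i: "i \<in> I" for i
  proof -
    have "\<phi> (s i) = (\<Sum>k\<in>I. if k = i then h i else 0)" unfolding \<phi>_def
      by (rule sum.cong) (auto simp: coord_simple i)
    also have "\<dots> = h i" using i finite_I by simp
    finally show ?thesis using g_inner by simp
  qed
  then show ?thesis by blast
qed

text \<open>Every functional is \<open>W\<^sub>J\<close>-conjugate to one that is nonnegative on the \<open>\<alpha>\<^sub>j\<close>, \<open>j \<in> J\<close>:
  maximize the height-pairing \<open>u f \<bullet> \<delta>\<close> (with \<open>\<delta> \<bullet> \<alpha>\<^sub>i = 1\<close>) over the finite group.\<close>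
lemma dominant_conjugate:
  assumes J: "J \<subseteq> I"
  obtains u where "u \<in> weyl_group s J" "\<forall>j\<in>J. u f \<bullet> s j \<ge> 0"
proof -
  obtain \<delta> where \<delta>: "\<forall>i\<in>I. \<delta> \<bullet> s i = 1" using functional_on_simple[of "\<lambda>_. 1"] by blast
  let ?h = "\<lambda>u. u f \<bullet> \<delta>"
  have fin: "finite (?h ` weyl_group s J)" using finite_weyl[OF J] by simp
  obtain u where u: "u \<in> weyl_group s J" "?h u = Max (?h ` weyl_group s J)"
    using Max_in[OF fin] weyl_id[of s J] by (metis (no_types, lifting) empty_iff image_iff)
  have "u f \<bullet> s j \<ge> 0" if j: "j \<in> J" for j
  proof (rule ccontr)
    assume "\<not> u f \<bullet> s j \<ge> 0"
    then have neg: "coroot_eval (u f) (s j) < 0"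
      using simple_nonzero[of j] j J by (auto simp: coroot_eval_def divide_less_0_iff)
    have "?h (refl (s j) \<circ> u) = ?h u - coroot_eval (u f) (s j) * (s j \<bullet> \<delta>)"
      by (simp add: refl_eq inner_diff_left)
    also have "s j \<bullet> \<delta> = 1" using \<delta> j J by (auto simp: inner_commute)
    finally have "?h (refl (s j) \<circ> u) > ?h u" using neg by simp
    moreover have "?h (refl (s j) \<circ> u) \<le> ?h u"
      unfolding u(2) by (rule Max_ge[OF fin imageI[OF weyl_step[OF u(1) j]]])
    ultimately show False by simp
  qed
  then show ?thesis using that u(1) by blast
qed

section \<open>The polyhedron and its standard faces\<close>

definition pos_roots_diff :: "'i set \<Rightarrow> 'i set \<Rightarrow> 'a set" where
  "pos_roots_diff A B = \<Phi> \<inter> simple_cone A - \<Phi> \<inter> simple_cone B"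

text \<open>The polyhedron \<open>conv (W\<^sub>J\<^sub>\<inter>\<^sub>I\<^sub>0 \<lambda>) - cone (\<Phi>\<^sup>+\<^sub>I\<^sub>0 \<setminus> \<Phi>\<^sup>+\<^sub>J\<^sub>\<inter>\<^sub>I\<^sub>0)\<close>; for \<open>I\<^sub>0 = I\<close> it is
  \<open>P(\<lambda>, J)\<close> itself, for general \<open>I\<^sub>0\<close> it is a standard face of it.\<close>
definition std_face :: "'i set \<Rightarrow> 'i set \<Rightarrow> 'a \<Rightarrow> 'a set" where
  "std_face J I0 lam =
     set_minus (convex hull (weyl_orbit s (J \<inter> I0) lam)) (cone_R (pos_roots_diff I0 (J \<inter> I0)))"

lemma finite_pos_roots_diff: "finite (pos_roots_diff A B)"
  unfolding pos_roots_diff_def using finite_roots by auto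

lemma simple_in_pos_roots_diff:
  assumes i: "i \<in> I - J" shows "s i \<in> pos_roots_diff I J"
proof -
  have "coord (s i) i \<noteq> 0" using i coord_simple[of i i] by simp
  then have "s i \<notin> simple_cone J" using i unfolding simple_cone_def by blast
  then show ?thesis using i simple_root simple_in_cone[of i I] unfolding pos_roots_diff_def by blast
qed

text \<open>\<open>W\<^sub>J\<close> permutes \<open>\<Phi>\<^sup>+ \<setminus> \<Phi>\<^sup>+\<^sub>J\<close>: such a root has a positive coordinate outside \<open>J\<close>, which
  \<open>W\<^sub>J\<close> does not change, so its image is again positive and outside \<open>\<Phi>\<^sub>J\<close>.\<close>
lemma weyl_permutes_pos_roots_diff:
  assumes J: "J \<subseteq> I" and u: "u \<in> weyl_group s J"
  shows "u ` pos_roots_diff I J = pos_roots_diff I J"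
proof (rule weyl_invariant[OF J _ u], rule image_subsetI)
  fix v \<beta> assume v: "v \<in> weyl_group s J" and \<beta>: "\<beta> \<in> pos_roots_diff I J"
  then have root: "\<beta> \<in> \<Phi>" and pos: "positive \<beta>" and "\<beta> \<notin> simple_cone J"
    unfolding pos_roots_diff_def simple_cone_def by auto
  then obtain i where i: "i \<in> I - J" "coord \<beta> i \<noteq> 0" unfolding simple_cone_def by blast
  then have same: "coord (v \<beta>) i = coord \<beta> i" and "coord \<beta> i > 0"
    using weyl_coord_outside[OF J v i(1)] pos unfolding positive_def by force+
  moreover have "v \<beta> \<in> \<Phi>" by (rule weyl_roots[OF J v root])
  ultimately have "positive (v \<beta>)"
    using root_positive_or_negative i(1) unfolding positive_def by (force simp: coord_minus)
  moreover have "v \<beta> \<notin> simple_cone J" using same i unfolding simple_cone_def by force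
  ultimately show "v \<beta> \<in> pos_roots_diff I J"
    using \<open>v \<beta> \<in> \<Phi>\<close> unfolding pos_roots_diff_def simple_cone_def by auto
qed

lemma weyl_permutes_polyhedron:
  assumes J: "J \<subseteq> I" and u: "u \<in> weyl_group s J"
  shows "u ` std_face J I lam = std_face J I lam"
proof (rule weyl_invariant[OF J _ u])
  fix v assume v: "v \<in> weyl_group s J"
  have lin: "linear v" and inj: "inj v"
    using weyl_orthogonal[OF J v] orthogonal_transformation_inj orthogonal_transformation_def by auto
  have hull: "v ` (convex hull (weyl_orbit s J lam)) = convex hull (weyl_orbit s J lam)"
    using convex_hull_linear_image[OF lin] weyl_orbit_invariant[OF J v] by metis
  have cone: "v ` cone_R (pos_roots_diff I J) \<subseteq> cone_R (pos_roots_diff I J)"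
    using cone_R_linear_image[OF lin inj] weyl_permutes_pos_roots_diff[OF J v] by metis
  show "v ` std_face J I lam \<subseteq> std_face J I lam"
  proof
    fix y assume "y \<in> v ` std_face J I lam"
    then obtain a c where y: "y = v (a - c)" and a: "a \<in> convex hull (weyl_orbit s J lam)"
      and c: "c \<in> cone_R (pos_roots_diff I J)"
      using J unfolding std_face_def set_minus_def by (auto simp: Int_absorb2)
    have "y = v a - v c" using y lin by (simp add: linear_diff)
    moreover have "v a \<in> convex hull (weyl_orbit s J lam)" using hull a by blast
    moreover have "v c \<in> cone_R (pos_roots_diff I J)" using cone c by blast
    ultimately show "y \<in> std_face J I lam"
      using J unfolding std_face_def set_minus_def by (auto simp: Int_absorb2)
  qed
qed

lemma std_face_contains: "lam \<in> std_face J I0 lam"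
proof -
  have "lam \<in> convex hull (weyl_orbit s (J \<inter> I0) lam)" by (rule hull_inc[OF weyl_orbit_self])
  then have "lam - 0 \<in> std_face J I0 lam"
    unfolding std_face_def set_minus_def using cone_R_zero by blast
  then show ?thesis by simp
qed

lemma polyhedron_max_face:
  assumes J: "J \<subseteq> I" and dom: "\<forall>j\<in>J. coroot_eval lam (s j) \<ge> 0"
    and g: "\<forall>i\<in>I. g \<bullet> s i \<ge> 0"
  shows "\<forall>q\<in>std_face J I lam. g \<bullet> q \<le> g \<bullet> lam"
    and "{q\<in>std_face J I lam. g \<bullet> q = g \<bullet> lam} = std_face J {i\<in>I. g \<bullet> s i = 0} lam"
proof -
  let ?I0 = "{i\<in>I. g \<bullet> s i = 0}" and ?V = "weyl_orbit s J lam" and ?R = "pos_roots_diff I J"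
  have gJ: "\<forall>k\<in>J. g \<bullet> s k \<ge> 0" using g J by auto
  have gR: "\<forall>r\<in>?R. g \<bullet> r \<ge> 0"
    using simple_cone_inner(1)[OF _ g] unfolding pos_roots_diff_def by blast
  have gV: "\<forall>v\<in>?V. g \<bullet> v \<le> g \<bullet> lam"
    using simple_cone_inner(1)[OF dominant_minus_conjugate[OF J dom] gJ]
    unfolding weyl_orbit_def by (auto simp: inner_diff_right)
  note level = hull_minus_cone_level[OF finite_weyl_orbit[OF J] finite_pos_roots_diff gV gR]
  have P: "std_face J I lam = set_minus (convex hull ?V) (cone_R ?R)"
    using J unfolding std_face_def by (simp add: Int_absorb2)
  show "\<forall>q\<in>std_face J I lam. g \<bullet> q \<le> g \<bullet> lam" using level(1) unfolding P .
  have J_I0: "{k\<in>J. g \<bullet> s k = 0} = J \<inter> ?I0" using J by auto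
  have "{v\<in>?V. g \<bullet> v = g \<bullet> lam} = weyl_orbit s (J \<inter> ?I0) lam"
  proof (intro equalityI subsetI)
    fix v assume "v \<in> {v\<in>?V. g \<bullet> v = g \<bullet> lam}"
    then obtain u where u: "u \<in> weyl_group s J" "v = u lam" "g \<bullet> (lam - u lam) = 0"
      unfolding weyl_orbit_def by (auto simp: inner_diff_right)
    show "v \<in> weyl_orbit s (J \<inter> ?I0) lam"
      using dominant_level_orbit[OF J dom gJ u(1,3)] u(2) J_I0 by simp
  next
    fix v assume "v \<in> weyl_orbit s (J \<inter> ?I0) lam"
    then obtain u where u: "u \<in> weyl_group s (J \<inter> ?I0)" "v = u lam" unfolding weyl_orbit_def by blast
    have "lam - u lam \<in> simple_cone (J \<inter> ?I0)"
      using dominant_minus_conjugate[OF _ _ u(1)] J dom by auto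
    then have "g \<bullet> (lam - u lam) = 0" by (rule simple_cone_orthogonal) auto
    moreover have "u \<in> weyl_group s J" using weyl_group_mono[OF _ u(1)] by blast
    ultimately show "v \<in> {v\<in>?V. g \<bullet> v = g \<bullet> lam}"
      using u(2) unfolding weyl_orbit_def by (auto simp: inner_diff_right)
  qed
  moreover have "{r\<in>?R. g \<bullet> r = 0} = pos_roots_diff ?I0 (J \<inter> ?I0)"
  proof (intro equalityI subsetI)
    fix r assume "r \<in> {r\<in>?R. g \<bullet> r = 0}"
    then have r: "r \<in> \<Phi>" "r \<in> simple_cone I" "r \<notin> simple_cone J" "g \<bullet> r = 0"
      unfolding pos_roots_diff_def by auto
    have "r \<in> simple_cone ?I0" using simple_cone_inner(2)[OF r(2) g r(4)] by simp
    moreover have "r \<notin> simple_cone (J \<inter> ?I0)" using r(3) simple_cone_mono[of "J \<inter> ?I0" J] by blast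
    ultimately show "r \<in> pos_roots_diff ?I0 (J \<inter> ?I0)" using r(1) unfolding pos_roots_diff_def by blast
  next
    fix r assume "r \<in> pos_roots_diff ?I0 (J \<inter> ?I0)"
    then have r: "r \<in> \<Phi>" "r \<in> simple_cone ?I0" "r \<notin> simple_cone (J \<inter> ?I0)"
      unfolding pos_roots_diff_def by auto
    have "r \<in> simple_cone I" using r(2) simple_cone_mono[of ?I0 I] by blast
    moreover have "r \<notin> simple_cone J" using r(2,3) simple_cone_Int[of r J ?I0] by blast
    moreover have "g \<bullet> r = 0" using r(2) by (rule simple_cone_orthogonal) auto
    ultimately show "r \<in> {r\<in>?R. g \<bullet> r = 0}" using r(1) unfolding pos_roots_diff_def by blast
  qed
  ultimately show "{q\<in>std_face J I lam. g \<bullet> q = g \<bullet> lam} = std_face J ?I0 lam"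
    using level(2) unfolding P by (simp add: std_face_def)
qed

text \<open>Every standard face is a face: take \<open>g\<close> vanishing on \<open>\<alpha>\<^sub>i\<close> for \<open>i \<in> I\<^sub>0\<close> and equal
  to \<open>1\<close> on the other simple roots.\<close>
lemma std_face_is_face:
  assumes J: "J \<subseteq> I" and dom: "\<forall>j\<in>J. coroot_eval lam (s j) \<ge> 0" and I0: "I0 \<subseteq> I"
  shows "is_face (std_face J I0 lam) (std_face J I lam)"
proof -
  obtain g where g: "\<forall>i\<in>I. g \<bullet> s i = (if i \<in> I0 then 0 else 1)"
    using functional_on_simple[of "\<lambda>i. if i \<in> I0 then 0 else 1"] by blast
  then have g_nonneg: "\<forall>i\<in>I. g \<bullet> s i \<ge> 0" by simp
  have "{i\<in>I. g \<bullet> s i = 0} = I0" using g I0 by (auto split: if_splits)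
  then have "\<forall>q\<in>std_face J I lam. g \<bullet> q \<le> g \<bullet> lam"
    and "std_face J I0 lam = {q\<in>std_face J I lam. g \<bullet> q = g \<bullet> lam}"
    using polyhedron_max_face[OF J dom g_nonneg] by simp_all
  then show ?thesis unfolding is_face_support using std_face_contains[of lam J I0] by blast
qed

text \<open>A proper face is cut out by
  a functional \<open>f\<close> bounded above on \<open>P(\<lambda>, J)\<close>, hence nonnegative on the recession cone; conjugating
  \<open>f\<close> into the \<open>J\<close>-dominant chamber makes it nonnegative on all simple roots, and the
  previous lemma identifies the conjugated face.\<close>
lemma face_conjugate_std_face:
  assumes J: "J \<subseteq> I" and dom: "\<forall>j\<in>J. coroot_eval lam (s j) \<ge> 0"
    and face: "is_face F (std_face J I lam)"
  shows "\<exists>w\<in>weyl_group s J. \<exists>I0\<subseteq>I. w ` F = std_face J I0 lam"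
proof (cases "F = std_face J I lam")
  case True
  then have "id ` F = std_face J I lam" by simp
  then show ?thesis using weyl_id[of s J] by blast
next
  case False
  let ?P = "std_face J I lam"
  obtain f m where f: "\<forall>p\<in>?P. f \<bullet> p \<le> m" "F = {p\<in>?P. f \<bullet> p = m}" and "F \<noteq> {}"
    using face False unfolding is_face_support by blast
  have P: "?P = set_minus (convex hull (weyl_orbit s J lam)) (cone_R (pos_roots_diff I J))"
    using J unfolding std_face_def by (simp add: Int_absorb2)
  have f_recession: "\<forall>r\<in>pos_roots_diff I J. f \<bullet> r \<ge> 0"
    using bounded_above_recession_nonneg[OF hull_inc[OF weyl_orbit_self] _ f(1)[unfolded P]] by blast
  obtain u where u: "u \<in> weyl_group s J" "\<forall>j\<in>J. u f \<bullet> s j \<ge> 0"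
    using dominant_conjugate[OF J] by blast
  note u_orth = weyl_orthogonal[OF J u(1)] and u_P = weyl_permutes_polyhedron[OF J u(1)]
  have "u f \<bullet> s i \<ge> 0" if i: "i \<in> I" "i \<notin> J" for i
  proof -
    obtain u' where u': "u' \<in> weyl_group s J" "\<And>x. u (u' x) = x" using weyl_inverse[OF J u(1)] by metis
    have "u' (s i) \<in> pos_roots_diff I J"
      using weyl_permutes_pos_roots_diff[OF J u'(1)] simple_in_pos_roots_diff i by blast
    then show ?thesis using f_recession weyl_inner[OF J u(1), of f "u' (s i)"] u'(2) by simp
  qed
  then have g: "\<forall>i\<in>I. u f \<bullet> s i \<ge> 0" using u(2) by blast
  note max = polyhedron_max_face[OF J dom g]
  have uF: "u ` F = {q\<in>?P. u f \<bullet> q = m}" and bound: "\<forall>q\<in>?P. u f \<bullet> q \<le> m"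
    using orthogonal_image_level[OF u_orth, of ?P f m] f u_P by simp_all
  have "m = u f \<bullet> lam"
  proof (rule order.antisym)
    show "u f \<bullet> lam \<le> m" using bound std_face_contains[of lam J I] by blast
    obtain q where "q \<in> u ` F" using \<open>F \<noteq> {}\<close> by blast
    then show "m \<le> u f \<bullet> lam" using uF max(1) by auto
  qed
  then have "u ` F = {q\<in>?P. u f \<bullet> q = u f \<bullet> lam}" unfolding uF by blast
  also have "\<dots> = std_face J {i\<in>I. u f \<bullet> s i = 0} lam" by (rule max(2))
  finally have "u ` F = std_face J {i\<in>I. u f \<bullet> s i = 0} lam" .
  moreover have "{i\<in>I. u f \<bullet> s i = 0} \<subseteq> I" by auto
  ultimately show ?thesis using u(1) by (intro bexI[of _ u] exI[of _ "{i\<in>I. u f \<bullet> s i = 0}"] conjI)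
qed

end

theorem mainTheorem6:
  fixes \<Phi> :: "'a::euclidean_space set" and I J :: "'i set" and s :: "'i \<Rightarrow> 'a"
    and lam lam' :: 'a and F :: "'a set"
  assumes "root_system \<Phi>"
    and "simple_roots \<Phi> I s"
    and "J \<subseteq> I"
    and "lam' \<in> weyl_orbit s J lam"
    and "\<forall>j\<in>J. coroot_eval lam' (s j) \<ge> 0"
  shows "is_face F (polyP \<Phi> I s lam J) \<longleftrightarrow>
    (\<exists>w\<in>weyl_group s J. \<exists>I0\<subseteq>I.
       w ` F = set_minus (convex hull (weyl_orbit s (J \<inter> I0) lam'))
                 (cone_R (pos_roots \<Phi> I s I0 - pos_roots \<Phi> I s (J \<inter> I0))))"
proof -
  interpret based_root_system \<Phi> I s using assms(1,2) by unfold_locales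
  note J = assms(3) and dom = assms(5)
  have std: "set_minus (convex hull (weyl_orbit s (J \<inter> I0) lam'))
      (cone_R (pos_roots \<Phi> I s I0 - pos_roots \<Phi> I s (J \<inter> I0))) = std_face J I0 lam'" for I0
    unfolding std_face_def pos_roots_diff_def pos_roots_eq ..
  have "polyP \<Phi> I s lam J = std_face J I lam'"
    using std[of I] J weyl_orbit_eq[OF J assms(4)] unfolding polyP_def by (simp add: Int_absorb2)
  moreover have "is_face F (std_face J I lam') \<longleftrightarrow> is_face (w ` F) (std_face J I lam')"
    if "w \<in> weyl_group s J" for w
    using is_face_orthogonal_image[OF weyl_orthogonal[OF J that] weyl_permutes_polyhedron[OF J that]] ..
  ultimately show ?thesis unfolding std
    using face_conjugate_std_face[OF J dom] std_face_is_face[OF J dom] by metis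
qed

end
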